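(* Let $\mathcal B=\{B_1,\dots,B_m\}$ be a partition of $n$ jobs with processing times $p_1,\dots,p_n$ into $m$ bags. Then $\mathcal B$ is a $\max\{2,\beta(\mathcal B)\}$-robust partition, where $\beta(\mathcal B)=\frac{\max_{B\in\mathcal B,|B|\ge2}p(B)}{\min_{B\in\mathcal B}p(B)}$.
   Context: Jobs $j\in[n]$ have processing times $p_j\ge0$; for a bag $B\subseteq[n]$, $p(B)=\sum_{j\in B}p_j$. For machines with speeds $s_1,\dots,s_m>0$, processing job $j$ on machine $i$ takes time $p_j/s_i$, and the makespan of an assignment is $\max_i(\text{total processing time on } i)/s_i$; $opt(\mathbf p,\mathbf s)$ denotes the minimum makespan over all assignments of the individual jobs to the machines. A partition $\mathcal B$ of the jobs into $m$ bags is $\gamma$-robust if for every speed vector $\mathbf s=(s_1,\dots,s_m)>0$ there is an assignment of the bags (each bag as a whole) to the $m$ machines with makespan at most $\gamma\cdot opt(\mathbf p,\mathbf s)$. *)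

theory Defs
  imports "HOL-Analysis.Analysis" "HOL-Library.Extended_Real"
begin

text \<open>Jobs are indexed by {..<n}, machines and bags by {..<m}.\<close>

definition psum :: "(nat \<Rightarrow> real) \<Rightarrow> nat set \<Rightarrow> real" where
  "psum p B = (\<Sum>j\<in>B. p j)"

text \<open>Makespan of a job assignment f (jobs to machines); loads are nonnegative,
  the 0 only matters for the degenerate case m = 0.\<close>
definition makespan :: "nat \<Rightarrow> nat \<Rightarrow> (nat \<Rightarrow> real) \<Rightarrow> (nat \<Rightarrow> real) \<Rightarrow> (nat \<Rightarrow> nat) \<Rightarrow> real" where
  "makespan n m p s f =
     Max (insert 0 ((\<lambda>i. (\<Sum>j\<in>{j. j < n \<and> f j = i}. p j) / s i) ` {..<m}))"

definition opt :: "nat \<Rightarrow> nat \<Rightarrow> (nat \<Rightarrow> real) \<Rightarrow> (nat \<Rightarrow> real) \<Rightarrow> real" where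
  "opt n m p s = Min (makespan n m p s ` ({..<n} \<rightarrow>\<^sub>E {..<m}))"

definition bag_makespan :: "nat \<Rightarrow> (nat \<Rightarrow> real) \<Rightarrow> (nat \<Rightarrow> nat set) \<Rightarrow> (nat \<Rightarrow> real) \<Rightarrow> (nat \<Rightarrow> nat) \<Rightarrow> real" where
  "bag_makespan m p B s g =
     Max (insert 0 ((\<lambda>i. (\<Sum>k\<in>{k. k < m \<and> g k = i}. psum p (B k)) / s i) ` {..<m}))"

definition is_partition :: "nat \<Rightarrow> nat \<Rightarrow> (nat \<Rightarrow> nat set) \<Rightarrow> bool" where
  "is_partition n m B \<longleftrightarrow>
     (\<Union>k<m. B k) = {..<n} \<and> (\<forall>k<m. \<forall>l<m. k \<noteq> l \<longrightarrow> B k \<inter> B l = {})"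

definition robust :: "nat \<Rightarrow> nat \<Rightarrow> (nat \<Rightarrow> real) \<Rightarrow> (nat \<Rightarrow> nat set) \<Rightarrow> ereal \<Rightarrow> bool" where
  "robust n m p B \<gamma> \<longleftrightarrow>
     (\<forall>s. (\<forall>i<m. s i > 0) \<longrightarrow>
        (\<exists>g \<in> {..<m} \<rightarrow>\<^sub>E {..<m}. ereal (bag_makespan m p B s g) \<le> \<gamma> * ereal (opt n m p s)))"

text \<open>Conventions: if there is no bag with >= 2 jobs, beta = 0 (so max{2,beta} = 2);
  if the minimum is 0, beta = infinity.\<close>
definition beta :: "nat \<Rightarrow> (nat \<Rightarrow> real) \<Rightarrow> (nat \<Rightarrow> nat set) \<Rightarrow> ereal" where
  "beta m p B =
     (let M = {k. k < m \<and> card (B k) \<ge> 2};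
          mn = Min (psum p ` B ` {..<m})
      in if M = {} then 0
         else if mn = 0 then \<infinity>
         else ereal (Max (psum p ` B ` M) / mn))"

end

theory Submission
  imports Defs
begin

(* Fix the speeds and an optimal schedule f of makespan T, and let gamma = max 2 beta.
  Insert the bags in nonincreasing order of size, each on some machine whose load stays
  within gamma * T * s i.  Suppose the current bag, of size b, fits nowhere.  If every bag has
  size at least b / gamma, summing the overflows over all machines gives more than
  gamma * T * sum s, against the volume bound sum p <= T * sum s (here gamma >= 2 pays for the
  bags already placed, each of size >= b).  Otherwise some bag is smaller than b / gamma, so by
  the definition of beta every bag placed so far, and the current one, is a single job of size
  >= b.  The schedule f puts each of these jobs on a machine with T * s i >= b, so their total
  size is at most the capacity T * sum s of those machines.  Hence one of those machines has
  load at most T * s i, and room for b since gamma * T * s i >= T * s i + b. *)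

definition load :: "('a \<Rightarrow> 'c::comm_monoid_add) \<Rightarrow> 'a set \<Rightarrow> ('a \<Rightarrow> 'b) \<Rightarrow> 'b \<Rightarrow> 'c" where
  "load p K f i = (\<Sum>j | j \<in> K \<and> f j = i. p j)"

lemma sum_load:
  assumes "finite K" "finite I" "f ` K \<subseteq> I"
  shows "(\<Sum>i\<in>I. load p K f i) = sum p K"
  unfolding load_def using sum.group[OF assms] .

lemma load_mono:
  fixes p :: "'a \<Rightarrow> 'c::ordered_comm_monoid_add"
  assumes "K \<subseteq> K'" "finite K'" "\<forall>j\<in>K'. 0 \<le> p j"
  shows "load p K f i \<le> load p K' f i"
  unfolding load_def using assms by (intro sum_mono2) auto

lemma load_fun_upd:
  assumes "finite K" "k \<in> K"
  shows "load p K (f(k := i')) i = load p (K - {k}) f i + (if i = i' then p k else 0)"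
proof -
  have "{j. j \<in> K \<and> (f(k := i')) j = i} =
      (if i = i' then insert k {j. j \<in> K - {k} \<and> f j = i} else {j. j \<in> K - {k} \<and> f j = i})"
    using assms(2) by auto
  then show ?thesis
    unfolding load_def using assms(1) by (simp add: add.commute)
qed

lemma job_le_load:
  fixes p :: "'a \<Rightarrow> 'c::ordered_comm_monoid_add"
  assumes "finite K" "j \<in> K" "\<forall>j\<in>K. 0 \<le> p j"
  shows "p j \<le> load p K f (f j)"
proof -
  have "sum p {j} \<le> load p K f (f j)"
    unfolding load_def using assms by (intro sum_mono2) auto
  then show ?thesis by simp
qed

lemma sum_le_capacity:
  fixes p s :: "'a \<Rightarrow> real"
  assumes "finite K" "finite I" "f ` K \<subseteq> I" "\<forall>i\<in>I. load p K f i \<le> T * s i"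
  shows "sum p K \<le> T * sum s I"
proof -
  have "sum p K = (\<Sum>i\<in>I. load p K f i)" using sum_load[OF assms(1-3), of p] by simp
  also have "\<dots> \<le> (\<Sum>i\<in>I. T * s i)" using assms(4) by (intro sum_mono) auto
  finally show ?thesis by (simp add: sum_distrib_left)
qed

lemma exists_le_of_sum_le:
  fixes a c :: "'a \<Rightarrow> 'b::linordered_ab_group_add"
  assumes "sum a I \<le> sum c I" "finite I" "I \<noteq> {}"
  obtains i where "i \<in> I" "a i \<le> c i"
  using assms sum_strict_mono[of I c a] by (meson not_le)

lemma makespan_le_iff:
  assumes "\<forall>i<m. 0 < s i"
  shows "makespan n m p s f \<le> T \<longleftrightarrow> 0 \<le> T \<and> (\<forall>i<m. load p {..<n} f i \<le> T * s i)"
  using assms by (auto simp: makespan_def load_def pos_divide_le_eq)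

lemma bag_makespan_eq_makespan: "bag_makespan m p B s g = makespan m m (\<lambda>k. psum p (B k)) s g"
  by (simp add: bag_makespan_def makespan_def)

lemma opt_attained:
  assumes "n = 0 \<or> 0 < m"
  obtains f where "f \<in> {..<n} \<rightarrow>\<^sub>E {..<m}" "makespan n m p s f = opt n m p s"
proof -
  have "{..<n} \<rightarrow>\<^sub>E {..<m} \<noteq> {}" using assms by (auto simp: PiE_eq_empty_iff)
  then have "opt n m p s \<in> makespan n m p s ` ({..<n} \<rightarrow>\<^sub>E {..<m})"
    unfolding opt_def by (intro Min_in) (auto simp: finite_PiE)
  then show ?thesis using that by auto
qed

lemma partition_bag_subset: "is_partition n m B \<Longrightarrow> k < m \<Longrightarrow> B k \<subseteq> {..<n}"
  unfolding is_partition_def by blast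

lemma partition_no_machines_imp_no_jobs: "is_partition n m B \<Longrightarrow> n = 0 \<or> 0 < m"
  unfolding is_partition_def by auto

lemma sum_psum_partition:
  assumes "is_partition n m B" "K \<subseteq> {..<m}"
  shows "(\<Sum>k\<in>K. psum p (B k)) = sum p (\<Union>k\<in>K. B k)"
proof -
  have "finite (B k)" if "k < m" for k
    using partition_bag_subset[OF assms(1) that] finite_subset by blast
  then show ?thesis
    unfolding psum_def using assms finite_subset[OF assms(2)]
    by (subst sum.UNION_disjoint) (auto simp: is_partition_def subset_iff disjoint_iff)
qed

lemma beta_neq_MInf: "beta m p B \<noteq> -\<infinity>"
  by (simp add: beta_def Let_def)

lemma psum_le_beta_mult:
  assumes beta: "beta m p B = ereal \<beta>" and "k < m" "l < m" "2 \<le> card (B k)"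
    and nonneg: "\<forall>k<m. 0 \<le> psum p (B k)"
  shows "psum p (B k) \<le> \<beta> * psum p (B l)"
proof -
  define M where "M = {k. k < m \<and> 2 \<le> card (B k)}"
  define mn where "mn = Min (psum p ` B ` {..<m})"
  have "k \<in> M" using assms unfolding M_def by simp
  moreover have "mn \<noteq> 0"
    using beta \<open>k \<in> M\<close> unfolding beta_def Let_def M_def[symmetric] mn_def[symmetric]
    by (auto split: if_splits)
  ultimately have \<beta>: "\<beta> = Max (psum p ` B ` M) / mn"
    using beta unfolding beta_def Let_def M_def[symmetric] mn_def[symmetric]
    by (auto split: if_splits)
  have "mn \<in> psum p ` B ` {..<m}" "mn \<le> psum p (B l)"
    unfolding mn_def using \<open>l < m\<close> by (auto intro: Min_in Min_le)
  with nonneg \<open>mn \<noteq> 0\<close> have "0 < mn" by force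
  have "psum p (B k) \<le> Max (psum p ` B ` M)"
    using \<open>k \<in> M\<close> unfolding M_def by (intro Max_ge) auto
  then have "psum p (B k) \<le> \<beta> * mn" "0 \<le> \<beta>"
    using \<beta> \<open>0 < mn\<close> nonneg \<open>k < m\<close> by (auto intro: order_trans)
  then show ?thesis
    using \<open>mn \<le> psum p (B l)\<close> by (meson mult_left_mono order_trans)
qed

locale partitioned_schedule =
  fixes n m :: nat and p :: "nat \<Rightarrow> real" and B :: "nat \<Rightarrow> nat set"
    and s :: "nat \<Rightarrow> real" and f :: "nat \<Rightarrow> nat" and T :: real
  assumes p_nonneg: "\<forall>j<n. 0 \<le> p j"
    and partition: "is_partition n m B"
    and s_pos: "\<forall>i<m. 0 < s i"
    and f_range: "f \<in> {..<n} \<rightarrow>\<^sub>E {..<m}"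
    and f_makespan: "makespan n m p s f \<le> T"
begin

abbreviation bag_size :: "nat \<Rightarrow> real" where
  "bag_size k \<equiv> psum p (B k)"

lemma T_nonneg: "0 \<le> T"
  using f_makespan makespan_le_iff[OF s_pos] by blast

lemma job_loads: "i < m \<Longrightarrow> load p {..<n} f i \<le> T * s i"
  using f_makespan makespan_le_iff[OF s_pos] by blast

lemma f_job_range: "j < n \<Longrightarrow> f j < m"
  using f_range by auto

lemma job_fits_machine:
  assumes "j < n"
  shows "p j \<le> T * s (f j)"
proof -
  have "p j \<le> load p {..<n} f (f j)"
    using assms p_nonneg by (intro job_le_load) auto
  also have "\<dots> \<le> T * s (f j)"
    using assms f_range by (intro job_loads) auto
  finally show ?thesis .
qed

lemma bag_size_nonneg: "k < m \<Longrightarrow> 0 \<le> bag_size k"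
  unfolding psum_def using partition_bag_subset[OF partition] p_nonneg
  by (intro sum_nonneg) auto

lemma sum_bag_size_le_capacity: "(\<Sum>k<m. bag_size k) \<le> T * (\<Sum>i<m. s i)"
proof -
  have "(\<Sum>k<m. bag_size k) = sum p {..<n}"
    using sum_psum_partition[OF partition, of "{..<m}"] partition
    by (simp add: is_partition_def)
  also have "\<dots> \<le> T * (\<Sum>i<m. s i)"
    using f_range job_loads by (intro sum_le_capacity) auto
  finally show ?thesis .
qed

lemma sum_large_jobs_le_capacity:
  assumes "J \<subseteq> {..<n}" "\<forall>j\<in>J. b \<le> p j"
  shows "sum p J \<le> T * (\<Sum>i | i < m \<and> b \<le> T * s i. s i)"
proof (rule sum_le_capacity)
  show "finite J" using assms(1) finite_subset by blast
  show "finite {i. i < m \<and> b \<le> T * s i}" by simp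
  show "f ` J \<subseteq> {i. i < m \<and> b \<le> T * s i}"
  proof (rule image_subsetI)
    fix j assume "j \<in> J"
    then have "j < n" "b \<le> p j" using assms by auto
    then show "f j \<in> {i. i < m \<and> b \<le> T * s i}"
      using f_job_range job_fits_machine[of j] by force
  qed
  show "\<forall>i\<in>{i. i < m \<and> b \<le> T * s i}. load p J f i \<le> T * s i"
  proof
    fix i assume "i \<in> {i. i < m \<and> b \<le> T * s i}"
    have "load p J f i \<le> load p {..<n} f i"
      using assms(1) p_nonneg by (intro load_mono) auto
    also have "\<dots> \<le> T * s i" using \<open>i \<in> _\<close> job_loads by simp
    finally show "load p J f i \<le> T * s i" .
  qed
qed

context
  fixes \<gamma> :: real
  assumes gamma_ge_2: "2 \<le> \<gamma>"
    and big_bags: "\<forall>k<m. \<forall>l<m. 2 \<le> card (B k) \<longrightarrow> bag_size k \<le> \<gamma> * bag_size l"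
begin

lemma greedy_step_balanced:
  assumes X: "X \<subseteq> {..<m}" "k \<in> X" and k_min: "\<forall>x\<in>X. bag_size k \<le> bag_size x"
    and g: "g ` (X - {k}) \<subseteq> {..<m}"
    and small: "\<forall>l<m. bag_size k \<le> \<gamma> * bag_size l"
  shows "\<exists>i<m. load bag_size (X - {k}) g i + bag_size k \<le> \<gamma> * T * s i"
proof -
  define b Y Z where "b = bag_size k" and "Y = X - {k}" and "Z = {..<m} - X"
  have fin: "finite X" "finite Y" using X finite_subset unfolding Y_def by auto
  have "0 \<le> b" using X bag_size_nonneg unfolding b_def by auto
  have "m = card Y + 1 + card Z"
    using X fin card_Diff_subset[of X "{..<m}"] card_mono[of "{..<m}" X] card_gt_0_iff[of X]
    unfolding Y_def Z_def by (auto simp: card_Diff_singleton)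
  then have card: "real m = card Y + 1 + card Z" by simp
  have split: "(\<Sum>k<m. bag_size k) = sum bag_size Y + b + sum bag_size Z"
    using X fin sum.subset_diff[OF X(1), of bag_size] sum.remove[OF fin(1) X(2), of bag_size]
    unfolding Y_def Z_def b_def by simp
  have Y_ge: "card Y * b \<le> sum bag_size Y"
    using k_min unfolding Y_def b_def by (intro sum_bounded_below) auto
  have Z_ge: "card Z * b \<le> \<gamma> * sum bag_size Z"
    using small sum_bounded_below[of Z b "\<lambda>l. \<gamma> * bag_size l"]
    unfolding Z_def b_def by (auto simp: sum_distrib_left)
  have "(\<Sum>i<m. load bag_size Y g i + b) = sum bag_size Y + m * b"
    using sum_load[OF fin(2) _ g[folded Y_def]] by (simp add: sum.distrib)
  also have "\<dots> \<le> \<gamma> * (\<Sum>k<m. bag_size k)"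
  proof -
    have "0 \<le> sum bag_size Y" using Y_ge \<open>0 \<le> b\<close> by (meson mult_nonneg_nonneg of_nat_0_le_iff order_trans)
    then show ?thesis
      unfolding split card using Y_ge Z_ge \<open>0 \<le> b\<close>
        mult_right_mono[OF gamma_ge_2, of "sum bag_size Y"] mult_right_mono[OF gamma_ge_2, of b]
      by (simp add: algebra_simps)
  qed
  also have "\<dots> \<le> (\<Sum>i<m. \<gamma> * T * s i)"
    using mult_left_mono[OF sum_bag_size_le_capacity] gamma_ge_2
    by (simp add: sum_distrib_left mult.assoc)
  finally obtain i where "i \<in> {..<m}" "load bag_size Y g i + b \<le> \<gamma> * T * s i"
    by (rule exists_le_of_sum_le) (use X in auto)
  then show ?thesis unfolding Y_def b_def by blast
qed

lemma bag_singleton_if_large: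
  assumes "x < m" "l < m" "\<gamma> * bag_size l < bag_size x"
  obtains j where "j < n" "B x = {j}" "bag_size x = p j"
proof -
  have "0 \<le> \<gamma> * bag_size l" using bag_size_nonneg[OF assms(2)] gamma_ge_2 by simp
  have "\<not> 2 \<le> card (B x)"
    using big_bags[rule_format, OF assms(1,2)] assms(3) by linarith
  moreover have "B x \<noteq> {}"
    using assms(3) \<open>0 \<le> \<gamma> * bag_size l\<close> unfolding psum_def by auto
  moreover have "finite (B x)"
    using partition_bag_subset[OF partition assms(1)] finite_subset by blast
  ultimately have "card (B x) = 1" using card_gt_0_iff[of "B x"] by linarith
  then obtain j where "B x = {j}" by (auto simp: card_1_singleton_iff)
  then show ?thesis
    using that partition_bag_subset[OF partition assms(1)] unfolding psum_def by auto
qed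

lemma greedy_step_singletons:
  assumes X: "X \<subseteq> {..<m}" "k \<in> X" and k_min: "\<forall>x\<in>X. bag_size k \<le> bag_size x"
    and g: "g ` (X - {k}) \<subseteq> {..<m}"
    and l: "l < m" "\<gamma> * bag_size l < bag_size k"
  shows "\<exists>i<m. load bag_size (X - {k}) g i + bag_size k \<le> \<gamma> * T * s i"
proof -
  define b Y S where "b = bag_size k" and "Y = X - {k}" and "S = {i. i < m \<and> b \<le> T * s i}"
  have fin: "finite X" "finite Y" "finite S" using X finite_subset unfolding Y_def S_def by auto
  have "0 \<le> \<gamma> * bag_size l" using bag_size_nonneg[OF l(1)] gamma_ge_2 by simp
  then have "0 < b" using l(2) unfolding b_def by linarith
  have "\<forall>j\<in>(\<Union>x\<in>X. B x). b \<le> p j"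
  proof
    fix j assume "j \<in> (\<Union>x\<in>X. B x)"
    then obtain x where "x \<in> X" "j \<in> B x" by blast
    moreover have "x < m" "b \<le> bag_size x" using \<open>x \<in> X\<close> X k_min unfolding b_def by auto
    moreover have "\<gamma> * bag_size l < bag_size x" using l(2) \<open>b \<le> bag_size x\<close> unfolding b_def by linarith
    ultimately show "b \<le> p j" using bag_singleton_if_large[of x l] l(1) by force
  qed
  moreover have "(\<Union>x\<in>X. B x) \<subseteq> {..<n}" using X partition_bag_subset[OF partition] by blast
  ultimately have "sum p (\<Union>x\<in>X. B x) \<le> T * sum s S"
    unfolding S_def by (intro sum_large_jobs_le_capacity)
  moreover have "sum p (\<Union>x\<in>X. B x) = sum bag_size Y + b"
    using sum.remove[OF fin(1) X(2), of bag_size] sum_psum_partition[OF partition X(1)]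
    unfolding Y_def b_def by simp
  moreover have "(\<Sum>i\<in>S. load bag_size Y g i) \<le> sum bag_size Y"
  proof -
    have "(\<Sum>i\<in>S. load bag_size Y g i) \<le> (\<Sum>i<m. load bag_size Y g i)"
      using X bag_size_nonneg unfolding S_def Y_def load_def
      by (intro sum_mono2) (auto intro!: sum_nonneg)
    also have "\<dots> = sum bag_size Y" using sum_load[OF fin(2) _ g[folded Y_def]] by simp
    finally show ?thesis .
  qed
  moreover have "0 \<le> sum bag_size Y"
    using X bag_size_nonneg unfolding Y_def by (auto intro!: sum_nonneg)
  ultimately have le: "(\<Sum>i\<in>S. load bag_size Y g i) \<le> (\<Sum>i\<in>S. T * s i)"
    and "0 < T * sum s S"
    using \<open>0 < b\<close> by (simp_all add: sum_distrib_left)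
  then have "S \<noteq> {}" by auto
  with le fin(3) obtain i where i: "i \<in> S" "load bag_size Y g i \<le> T * s i"
    by (rule exists_le_of_sum_le)
  then have "i < m" "b \<le> T * s i" unfolding S_def by auto
  then have "T * s i + b \<le> \<gamma> * T * s i"
    using mult_right_mono[OF gamma_ge_2, of "T * s i"] \<open>0 < b\<close> by (simp add: mult.assoc)
  then have "load bag_size Y g i + b \<le> \<gamma> * T * s i" using i(2) by linarith
  then show ?thesis using \<open>i < m\<close> unfolding Y_def b_def by blast
qed

lemma greedy_step:
  assumes "X \<subseteq> {..<m}" "k \<in> X" "\<forall>x\<in>X. bag_size k \<le> bag_size x"
    and "g ` (X - {k}) \<subseteq> {..<m}"
  shows "\<exists>i<m. load bag_size (X - {k}) g i + bag_size k \<le> \<gamma> * T * s i"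
proof (cases "\<forall>l<m. bag_size k \<le> \<gamma> * bag_size l")
  case True
  then show ?thesis using greedy_step_balanced assms by blast
next
  case False
  then show ?thesis using greedy_step_singletons assms by (auto simp: not_le)
qed

lemma greedy_assignment:
  assumes "X \<subseteq> {..<m}"
  shows "\<exists>g. g ` X \<subseteq> {..<m} \<and> (\<forall>i<m. load bag_size X g i \<le> \<gamma> * T * s i)"
proof -
  have "finite X" using assms finite_subset by blast
  then show ?thesis using assms
  proof (induction X rule: finite_remove_induct)
    \<comment> \<open>a smallest bag is inserted last, so bags go in by nonincreasing size\<close>
    case empty
    have "0 \<le> \<gamma> * T * s i" if "i < m" for i
      using that gamma_ge_2 T_nonneg s_pos by (simp add: less_imp_le)
    then show ?case by (simp add: load_def)
  next
    case (remove X)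
    obtain k where k: "k \<in> X" "\<forall>x\<in>X. bag_size k \<le> bag_size x"
      using ex_is_arg_min_if_finite[OF remove(1,2), of bag_size] by (auto simp: is_arg_min_linorder)
    obtain g where g: "g ` (X - {k}) \<subseteq> {..<m}"
      "\<forall>i<m. load bag_size (X - {k}) g i \<le> \<gamma> * T * s i"
      using remove.IH[OF k(1)] remove.prems by blast
    obtain i' where i': "i' < m" "load bag_size (X - {k}) g i' + bag_size k \<le> \<gamma> * T * s i'"
      using greedy_step[OF remove.prems k g(1)] by blast
    have "load bag_size X (g(k := i')) i \<le> \<gamma> * T * s i" if "i < m" for i
      using g(2) i' that by (simp add: load_fun_upd[OF remove(1) k(1)])
    moreover have "(g(k := i')) ` X \<subseteq> {..<m}" using g(1) i' by auto
    ultimately show ?case by blast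
  qed
qed

lemma bag_assignment_exists: "\<exists>g\<in>{..<m} \<rightarrow>\<^sub>E {..<m}. bag_makespan m p B s g \<le> \<gamma> * T"
proof -
  obtain g where g: "g ` {..<m} \<subseteq> {..<m}" "\<forall>i<m. load bag_size {..<m} g i \<le> \<gamma> * T * s i"
    using greedy_assignment by blast
  have "load bag_size {..<m} (restrict g {..<m}) = load bag_size {..<m} g"
    unfolding load_def by (intro ext sum.cong) auto
  then have "bag_makespan m p B s (restrict g {..<m}) \<le> \<gamma> * T"
    using g(2) gamma_ge_2 T_nonneg
    by (simp add: bag_makespan_eq_makespan makespan_le_iff[OF s_pos] mult.assoc)
  moreover have "restrict g {..<m} \<in> {..<m} \<rightarrow>\<^sub>E {..<m}" using g(1) by auto
  ultimately show ?thesis by blast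
qed

end

lemma bag_assignment_exists_if_T_eq_0:
  assumes "T = 0"
  shows "\<exists>g\<in>{..<m} \<rightarrow>\<^sub>E {..<m}. bag_makespan m p B s g \<le> 0"
proof -
  have "(\<Sum>k<m. bag_size k) \<le> 0" using sum_bag_size_le_capacity assms by simp
  moreover have "0 \<le> (\<Sum>k<m. bag_size k)" using bag_size_nonneg by (auto intro: sum_nonneg)
  ultimately have "(\<Sum>k<m. bag_size k) = 0" by linarith
  then have "\<forall>k<m. bag_size k = 0"
    using bag_size_nonneg sum_nonneg_eq_0_iff[of "{..<m}" bag_size] by simp
  then have "\<forall>k<m. \<forall>l<m. 2 \<le> card (B k) \<longrightarrow> bag_size k \<le> 2 * bag_size l" by simp
  from bag_assignment_exists[OF order.refl this] show ?thesis using assms by simp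
qed

lemma bag_assignment_within_max_2_beta:
  "\<exists>g\<in>{..<m} \<rightarrow>\<^sub>E {..<m}. ereal (bag_makespan m p B s g) \<le> max 2 (beta m p B) * ereal T"
proof (cases "beta m p B")
  case (real \<beta>)
  have "\<forall>k<m. \<forall>l<m. 2 \<le> card (B k) \<longrightarrow> bag_size k \<le> max 2 \<beta> * bag_size l"
    using psum_le_beta_mult[OF real] bag_size_nonneg
    by (meson max.cobounded2 mult_right_mono order_trans)
  then obtain g where "g \<in> {..<m} \<rightarrow>\<^sub>E {..<m}" "bag_makespan m p B s g \<le> max 2 \<beta> * T"
    using bag_assignment_exists[OF max.cobounded1] by blast
  moreover have "max 2 (beta m p B) * ereal T = ereal (max 2 \<beta> * T)"
    using real by (simp del: ereal_max add: ereal_max[symmetric])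
  ultimately show ?thesis by auto
next
  case PInf
  show ?thesis
  proof (cases "T = 0")
    case True
    \<comment> \<open>\<open>\<infinity> * 0 = 0\<close> in \<open>ereal\<close>, so a zero-makespan bag assignment is needed\<close>
    then show ?thesis using bag_assignment_exists_if_T_eq_0 PInf by auto
  next
    case False
    then have "max 2 (beta m p B) * ereal T = \<infinity>"
      using T_nonneg PInf by simp
    moreover have "{..<m} \<rightarrow>\<^sub>E {..<m} \<noteq> {}" by (auto simp: PiE_eq_empty_iff)
    ultimately show ?thesis by auto
  qed
next
  case MInf
  then show ?thesis using beta_neq_MInf by simp
qed

end

theorem lemma2:
  fixes n m :: nat and p :: "nat \<Rightarrow> real" and B :: "nat \<Rightarrow> nat set"
  assumes "\<forall>j<n. p j \<ge> 0"
    and "is_partition n m B"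
  shows "robust n m p B (max 2 (beta m p B))"
  unfolding robust_def
proof (intro allI impI)
  fix s :: "nat \<Rightarrow> real"
  assume s_pos: "\<forall>i<m. 0 < s i"
  obtain f where f: "f \<in> {..<n} \<rightarrow>\<^sub>E {..<m}" "makespan n m p s f = opt n m p s"
    using opt_attained partition_no_machines_imp_no_jobs[OF assms(2)] by blast
  interpret partitioned_schedule n m p B s f "opt n m p s"
    using assms s_pos f by unfold_locales auto
  show "\<exists>g\<in>{..<m} \<rightarrow>\<^sub>E {..<m}.
      ereal (bag_makespan m p B s g) \<le> max 2 (beta m p B) * ereal (opt n m p s)"
    by (rule bag_assignment_within_max_2_beta)
qed

end
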